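(* Let $\Delta_{1,0}=\{A=(a_{ij})\in SL_3(\mathfrak{o}) : (a_{21}\neq 0\text{ or }a_{31}\neq0)\text{ and } a_{21}a_{32}-a_{22}a_{31}=0\}$. Then $$\Delta_{1,0}=\bigsqcup_{\substack{y_1,y_2\in Y(\mathfrak{o})\\ y_2\neq I_2}}\ \bigsqcup_{d\in D(3)}\ \bigsqcup_{u\in U(3)} \varphi_2(y_1^{-1})\,\varphi_1(y_2^{-1})\,d\,u\,\Gamma_\infty(3),$$ i.e. $\Delta_{1,0}$ is the union of these sets and they are pairwise disjoint for distinct tuples $(y_1,y_2,d,u)$.
   Context: Let $\omega=e^{2\pi i/3}$, $\mathfrak{o}=\mathbb{Z}[\omega]$, $\mathfrak{o}^\times$ its unit group. Fix representatives of nonzero elements modulo units ("$c\in(\mathfrak{o}-\{0\})/\mathfrak{o}^\times$") and, for each nonzero $c$, representatives of $\mathfrak{o}/c\mathfrak{o}$ ("$a\in\mathfrak{o}/c\mathfrak{o}$"). $Y(\mathfrak{o})=\{\begin{pmatrix}a&b\\c&d\end{pmatrix}\in SL_2(\mathfrak{o}) : c\in(\mathfrak{o}-\{0\})/\mathfrak{o}^\times,\ a\in\mathfrak{o}/c\mathfrak{o}\}\cup\{I_2\}$. $\Gamma(3)=\{A\in SL_3(\mathfrak{o}):A\equiv I_3\pmod{3\mathfrak{o}}\}$ (entrywise), $\Gamma_\infty(3)$ its subgroup of upper triangular unipotent matrices. $D(3)$: diagonal $\mathrm{diag}(i,j,k)$ with $i,j,k\in\mathfrak{o}$, $ijk=1$.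 $U(3)$: matrices $\begin{pmatrix}1&\alpha&\beta\\&1&\gamma\\&&1\end{pmatrix}$ with $\alpha,\beta,\gamma\in\{0,1,2\}+\{0,1,2\}\omega$. For $y=\begin{pmatrix}a&b\\c&d\end{pmatrix}\in SL_2(\mathfrak{o})$, $\varphi_1(y)=\begin{pmatrix}a&b&0\\c&d&0\\0&0&1\end{pmatrix}$, $\varphi_2(y)=\begin{pmatrix}1&0&0\\0&a&b\\0&c&d\end{pmatrix}$. *)

theory Defs
  imports "HOL-Analysis.Analysis"
begin

definition omega :: complex where
  "omega = exp (2 * pi * \<i> / 3)"

definition Eis :: "complex set" where
  "Eis = {of_int a + of_int b * omega | a b. True}"

definition eis_unit :: "complex \<Rightarrow> bool" where
  "eis_unit u \<longleftrightarrow> u \<in> Eis \<and> (\<exists>v\<in>Eis. u * v = 1)"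

definition eis_dvd :: "complex \<Rightarrow> complex \<Rightarrow> bool" where
  "eis_dvd c x \<longleftrightarrow> (\<exists>k\<in>Eis. x = c * k)"

definition unit_reps :: "complex set \<Rightarrow> bool" where
  "unit_reps R \<longleftrightarrow> R \<subseteq> Eis - {0} \<and>
     (\<forall>x\<in>Eis - {0}. \<exists>!r. r \<in> R \<and> (\<exists>u. eis_unit u \<and> x = u * r))"

definition residue_reps :: "complex set \<Rightarrow> (complex \<Rightarrow> complex set) \<Rightarrow> bool" where
  "residue_reps R S \<longleftrightarrow>
     (\<forall>c\<in>R. S c \<subseteq> Eis \<and> (\<forall>x\<in>Eis. \<exists>!a. a \<in> S c \<and> eis_dvd c (x - a)))"

definition SLo :: "(complex^'n^'n) set" where
  "SLo = {A. (\<forall>i j. A$i$j \<in> Eis) \<and> det A = 1}"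

definition Yo :: "complex set \<Rightarrow> (complex \<Rightarrow> complex set) \<Rightarrow> (complex^2^2) set" where
  "Yo R S = {y \<in> SLo. y$2$1 \<in> R \<and> y$1$1 \<in> S (y$2$1)} \<union> {mat 1}"

definition Gamma3 :: "(complex^3^3) set" where
  "Gamma3 = {A \<in> SLo. \<forall>i j. eis_dvd 3 (A$i$j - (if i = j then 1 else 0))}"

definition Gamma_inf3 :: "(complex^3^3) set" where
  "Gamma_inf3 = {A \<in> Gamma3. A$1$1 = 1 \<and> A$2$2 = 1 \<and> A$3$3 = 1 \<and>
                               A$2$1 = 0 \<and> A$3$1 = 0 \<and> A$3$2 = 0}"

definition D3 :: "(complex^3^3) set" where
  "D3 = {vector [vector [i, 0, 0], vector [0, j, 0], vector [0, 0, k]] | i j k.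
           i \<in> Eis \<and> j \<in> Eis \<and> k \<in> Eis \<and> i * j * k = 1}"

definition digits3 :: "complex set" where
  "digits3 = {of_int a + of_int b * omega | a b. a \<in> {0,1,2} \<and> b \<in> {0,1,2}}"

definition U3 :: "(complex^3^3) set" where
  "U3 = {vector [vector [1, al, be], vector [0, 1, ga], vector [0, 0, 1]] | al be ga.
           al \<in> digits3 \<and> be \<in> digits3 \<and> ga \<in> digits3}"

definition phi1 :: "complex^2^2 \<Rightarrow> complex^3^3" where
  "phi1 y = vector [vector [y$1$1, y$1$2, 0], vector [y$2$1, y$2$2, 0], vector [0, 0, 1]]"

definition phi2 :: "complex^2^2 \<Rightarrow> complex^3^3" where
  "phi2 y = vector [vector [1, 0, 0], vector [0, y$1$1, y$1$2], vector [0, y$2$1, y$2$2]]"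

definition Delta10 :: "(complex^3^3) set" where
  "Delta10 = {A \<in> SLo. (A$2$1 \<noteq> 0 \<or> A$3$1 \<noteq> 0) \<and> A$2$1 * A$3$2 - A$2$2 * A$3$1 = 0}"

definition lcoset :: "complex^3^3 \<Rightarrow> (complex^3^3) set \<Rightarrow> (complex^3^3) set" where
  "lcoset g H = (\<lambda>h. g ** h) ` H"

definition index_set :: "complex set \<Rightarrow> (complex \<Rightarrow> complex set) \<Rightarrow>
    ((complex^2^2) \<times> (complex^2^2) \<times> (complex^3^3) \<times> (complex^3^3)) set" where
  "index_set R S = {(y1, y2, d, u). y1 \<in> Yo R S \<and> y2 \<in> Yo R S \<and> y2 \<noteq> mat 1 \<and>
                                    d \<in> D3 \<and> u \<in> U3}"

definition piece :: "(complex^2^2) \<times> (complex^2^2) \<times> (complex^3^3) \<times> (complex^3^3) \<Rightarrow> (complex^3^3) set" where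
  "piece t = (case t of (y1, y2, d, u) \<Rightarrow>
      lcoset (phi2 (matrix_inv y1) ** phi1 (matrix_inv y2) ** d ** u) Gamma_inf3)"

end

theory Submission
  imports Defs
begin

text \<open>
  Write \<open>M(y1, y2) = phi2 (y1\<inverse>) phi1 (y2\<inverse>)\<close> and \<open>B\<close> for the upper triangular
  matrices in \<open>SL3(o)\<close>. The first column of \<open>M(y1, y2)\<close> is \<open>(d2, -d1 c2, c1 c2)\<close>, where
  \<open>(ci, di)\<close> is the bottom row of \<open>yi\<close>, and \<open>M(y1, y2) B \<subseteq> Delta10\<close> when \<open>c2 \<noteq> 0\<close>,
  because \<open>Delta10\<close> is stable under right multiplication by \<open>B\<close>. Conversely, for
  \<open>A \<in> Delta10\<close> the vanishing minor makes \<open>(a21, a31)\<close> a multiple of a primitive vector;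
  up to a unit this vector is the bottom row of \<open>y1\<close>, the multiplier normalised by \<open>R\<close> is
  \<open>c2\<close>, and \<open>a11\<close> then gives \<open>d2\<close>. The pair \<open>(y1, y2)\<close> is unique because \<open>c2\<close> is a
  gcd of \<open>a21\<close> and \<open>a31\<close>, fixed by \<open>R\<close>, and an element of \<open>Y(o)\<close> is determined by its
  bottom row. Finally every \<open>b \<in> B\<close> is uniquely \<open>d u h\<close> with \<open>d \<in> D(3)\<close>, \<open>u \<in> U(3)\<close>,
  \<open>h \<in> \<Gamma>\<^sub>\<infinity>(3)\<close>: \<open>d\<close> is the diagonal of \<open>b\<close>, and \<open>U(3)\<close> represents the
  unipotent upper triangular matrices modulo \<open>\<Gamma>\<^sub>\<infinity>(3)\<close>.
\<close>

lemma omega_eq: "omega = Complex (-1/2) (sqrt 3 / 2)"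
proof -
  have "omega = cis (2*pi/3)"
    unfolding omega_def cis_conv_exp by (simp add: field_simps)
  then show ?thesis
    by (simp add: cis.code cos_120 sin_120)
qed

lemma omega_times_omega: "omega * omega = - 1 - omega"
  by (simp add: omega_eq complex_eq_iff field_simps)

lemma of_int_plus_omega_eq_iff:
  "(of_int a + of_int b * omega :: complex) = of_int a' + of_int b' * omega \<longleftrightarrow> a = a' \<and> b = b'"
proof
  assume eq: "(of_int a + of_int b * omega :: complex) = of_int a' + of_int b' * omega"
  from arg_cong[OF eq, of Im] have "b = b'"
    by (simp add: omega_eq)
  with arg_cong[OF eq, of Re] show "a = a' \<and> b = b'"
    by (simp add: omega_eq)
qed simp

lemma Eis_iff: "x \<in> Eis \<longleftrightarrow> (\<exists>a b. x = of_int a + of_int b * omega)"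
  by (simp add: Eis_def)

lemma Eis_add [intro, simp]:
  assumes "x \<in> Eis" "y \<in> Eis"
  shows "x + y \<in> Eis"
proof -
  obtain a b c d where "x = of_int a + of_int b * omega" "y = of_int c + of_int d * omega"
    using assms unfolding Eis_iff by blast
  then have "x + y = of_int (a + c) + of_int (b + d) * omega"
    by (simp add: algebra_simps)
  then show ?thesis
    unfolding Eis_iff by blast
qed

lemma Eis_uminus [intro, simp]:
  assumes "x \<in> Eis"
  shows "- x \<in> Eis"
proof -
  obtain a b where "x = of_int a + of_int b * omega"
    using assms unfolding Eis_iff by blast
  then have "- x = of_int (- a) + of_int (- b) * omega"
    by (simp add: algebra_simps)
  then show ?thesis
    unfolding Eis_iff by blast
qed

lemma Eis_diff [intro, simp]: "x \<in> Eis \<Longrightarrow> y \<in> Eis \<Longrightarrow> x - y \<in> Eis"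
  using Eis_add[of x "- y"] by simp

lemma Eis_mult [intro, simp]:
  assumes "x \<in> Eis" "y \<in> Eis"
  shows "x * y \<in> Eis"
proof -
  obtain a b c d where x: "x = of_int a + of_int b * omega" and y: "y = of_int c + of_int d * omega"
    using assms unfolding Eis_iff by blast
  have "x * y = of_int (a*c) + of_int (a*d + b*c) * omega + of_int (b*d) * (omega * omega)"
    unfolding x y by (simp add: algebra_simps)
  also have "\<dots> = of_int (a*c - b*d) + of_int (a*d + b*c - b*d) * omega"
    unfolding omega_times_omega by (simp add: algebra_simps)
  finally show ?thesis
    unfolding Eis_iff by blast
qed

lemma Eis_of_int [intro, simp]: "of_int n \<in> Eis"
  unfolding Eis_iff by (rule exI[of _ n], rule exI[of _ 0]) simp

lemma Eis_0 [intro, simp]: "0 \<in> Eis"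
  using Eis_of_int[of 0] by simp

lemma Eis_1 [intro, simp]: "1 \<in> Eis"
  using Eis_of_int[of 1] by simp

lemma Eis_numeral [intro, simp]: "numeral n \<in> Eis"
  using Eis_of_int[of "numeral n"] by simp

lemma Eis_sum: "(\<And>i. i \<in> I \<Longrightarrow> f i \<in> Eis) \<Longrightarrow> sum f I \<in> Eis"
  by (induction I rule: infinite_finite_induct) auto

lemma eis_dvd_add: "eis_dvd c x \<Longrightarrow> eis_dvd c y \<Longrightarrow> eis_dvd c (x + y)"
  unfolding eis_dvd_def by (metis Eis_add distrib_left)

lemma eis_dvd_diff: "eis_dvd c x \<Longrightarrow> eis_dvd c y \<Longrightarrow> eis_dvd c (x - y)"
  unfolding eis_dvd_def by (metis Eis_diff right_diff_distrib)

lemma eis_dvd_mult_right: "eis_dvd c x \<Longrightarrow> z \<in> Eis \<Longrightarrow> eis_dvd c (x * z)"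
  unfolding eis_dvd_def by (metis Eis_mult mult.assoc)

lemma eis_dvd_mult_left: "eis_dvd c x \<Longrightarrow> z \<in> Eis \<Longrightarrow> eis_dvd c (z * x)"
  using eis_dvd_mult_right by (simp add: mult.commute)

lemma eis_dvd_triv_left: "z \<in> Eis \<Longrightarrow> eis_dvd c (c * z)"
  unfolding eis_dvd_def by blast

lemma eis_dvd_0 [simp]: "eis_dvd c 0"
  using eis_dvd_triv_left[of 0 c] by simp

lemma eis_dvd_imp_Eis: "eis_dvd c x \<Longrightarrow> c \<in> Eis \<Longrightarrow> x \<in> Eis"
  unfolding eis_dvd_def by auto

lemma eis_dvd_of_coprime_multiples:
  assumes "a \<in> Eis" "b \<in> Eis" "a * d - b * c = 1" "eis_dvd g (x * c)" "eis_dvd g (x * d)"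
  shows "eis_dvd g x"
proof -
  have "x = x * (a * d - b * c)"
    using assms(3) by simp
  then have "x = a * (x * d) - b * (x * c)"
    by (simp add: algebra_simps)
  with assms show ?thesis
    by (metis eis_dvd_diff eis_dvd_mult_left)
qed

lemma eis_unit_iff: "eis_unit u \<longleftrightarrow> u \<in> Eis \<and> u \<noteq> 0 \<and> inverse u \<in> Eis"
  unfolding eis_unit_def by (metis inverse_unique mult_zero_left right_inverse zero_neq_one)

lemma eis_unit_mult: "eis_unit u \<Longrightarrow> eis_unit v \<Longrightarrow> eis_unit (u * v)"
  unfolding eis_unit_iff by (simp add: nonzero_inverse_mult_distrib)

lemma eis_unit_inverse: "eis_unit u \<Longrightarrow> eis_unit (inverse u)"
  unfolding eis_unit_iff by simp

lemma unit_reps_unit_mult_eq: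
  assumes "unit_reps R" "r \<in> R" "r' \<in> R" "eis_unit u" "r' = u * r"
  shows "r' = r"
proof -
  have "r' \<in> Eis - {0}" "eis_unit 1"
    using assms(1,3) unfolding unit_reps_def eis_unit_def by auto
  with assms show ?thesis
    unfolding unit_reps_def by (metis mult_1)
qed

lemma unit_reps_dvd_antisym:
  assumes R: "unit_reps R" "r \<in> R" "r' \<in> R" and "eis_dvd r r'" "eis_dvd r' r"
  shows "r = r'"
proof -
  obtain k k' where k: "k \<in> Eis" "r' = r * k" and k': "k' \<in> Eis" "r = r' * k'"
    using assms(4,5) unfolding eis_dvd_def by blast
  have "r \<noteq> 0"
    using R unfolding unit_reps_def by auto
  with k k' have "k * k' = 1"
    by (metis mult.assoc mult_cancel_left1)
  with k k' have "eis_unit k"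
    unfolding eis_unit_def by blast
  with R k show ?thesis
    using unit_reps_unit_mult_eq by (metis mult.commute)
qed

lemma unit_reps_factor:
  assumes "unit_reps R" "x \<in> Eis" "x \<noteq> 0"
  obtains u r where "eis_unit u" "r \<in> R" "x = u * r"
  using assms unfolding unit_reps_def by blast

lemma residue_reps_unique:
  assumes "residue_reps R S" "c \<in> R" "a \<in> S c" "a' \<in> S c" "eis_dvd c (a - a')"
  shows "a = a'"
proof -
  have "a \<in> Eis" "eis_dvd c (a - a)"
    using assms(1-3) unfolding residue_reps_def by auto
  with assms show ?thesis
    unfolding residue_reps_def by metis
qed

lemma digits3_Eis: "x \<in> digits3 \<Longrightarrow> x \<in> Eis"
  unfolding digits3_def Eis_def by blast

lemma digits3_exists:
  assumes "x \<in> Eis"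
  obtains \<delta> where "\<delta> \<in> digits3" "eis_dvd 3 (x - \<delta>)"
proof -
  obtain a b where x: "x = of_int a + of_int b * omega"
    using assms Eis_iff by blast
  let ?\<delta> = "of_int (a mod 3) + of_int (b mod 3) * omega"
  have "?\<delta> \<in> digits3"
    unfolding digits3_def
    by (rule CollectI, rule exI[of _ "a mod 3"], rule exI[of _ "b mod 3"]) auto
  moreover have "eis_dvd 3 (x - ?\<delta>)"
  proof -
    have "of_int a = (3 * of_int (a div 3) + of_int (a mod 3) :: complex)"
      "of_int b = (3 * of_int (b div 3) + of_int (b mod 3) :: complex)"
      by (metis div_mult_mod_eq mult.commute of_int_add of_int_mult of_int_numeral)+
    then have "x - ?\<delta> = 3 * (of_int (a div 3) + of_int (b div 3) * omega)"
      unfolding x by (simp add: algebra_simps)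
    moreover have "of_int (a div 3) + of_int (b div 3) * omega \<in> Eis"
      unfolding Eis_iff by blast
    ultimately show ?thesis
      by (metis eis_dvd_triv_left)
  qed
  ultimately show ?thesis
    using that by blast
qed

lemma digits3_unique:
  assumes "\<delta> \<in> digits3" "\<delta>' \<in> digits3" "eis_dvd 3 (\<delta> - \<delta>')"
  shows "\<delta> = \<delta>'"
proof -
  obtain a b a' b' where d: "\<delta> = of_int a + of_int b * omega" "\<delta>' = of_int a' + of_int b' * omega"
    and range: "a \<in> {0,1,2}" "b \<in> {0,1,2}" "a' \<in> {0,1,2}" "b' \<in> {0,1,2}"
    using assms(1,2) unfolding digits3_def by blast
  obtain k where "k \<in> Eis" "\<delta> - \<delta>' = 3 * k"
    using assms(3) unfolding eis_dvd_def by blast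
  then obtain m n where "\<delta> - \<delta>' = 3 * (of_int m + of_int n * omega)"
    unfolding Eis_iff by blast
  then have "of_int (a - a') + of_int (b - b') * omega = (of_int (3*m) + of_int (3*n) * omega :: complex)"
    unfolding d by (simp add: algebra_simps)
  then have "a - a' = 3 * m" "b - b' = 3 * n"
    unfolding of_int_plus_omega_eq_iff by simp_all
  with range have "a = a'" "b = b'"
    by auto presburger+
  then show ?thesis
    using d by simp
qed

lemma SLo_mult:
  fixes A B :: "complex^'n^'n"
  assumes "A \<in> SLo" "B \<in> SLo"
  shows "A ** B \<in> SLo"
proof -
  have "det (A ** B) = 1"
    using assms unfolding SLo_def by (simp add: det_mul)
  with assms show ?thesis
    unfolding SLo_def by (auto simp: matrix_matrix_mult_def intro!: Eis_sum)
qed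

lemma matrix_inv_inverse:
  fixes A :: "'a::semiring_1^'n^'n"
  assumes "invertible A"
  shows "A ** matrix_inv A = mat 1" "matrix_inv A ** A = mat 1"
proof -
  have "\<exists>A'. A ** A' = mat 1 \<and> A' ** A = mat 1"
    using assms unfolding invertible_def .
  then have "A ** matrix_inv A = mat 1 \<and> matrix_inv A ** A = mat 1"
    unfolding matrix_inv_def by (rule someI_ex)
  then show "A ** matrix_inv A = mat 1" "matrix_inv A ** A = mat 1"
    by auto
qed

lemma matrix_inv_eqI:
  fixes A B :: "'a::semiring_1^'n^'n"
  assumes "A ** B = mat 1" "B ** A = mat 1"
  shows "matrix_inv A = B"
proof -
  have "invertible A"
    using assms unfolding invertible_def by blast
  have "matrix_inv A = matrix_inv A ** (A ** B)"
    using assms(1) by simp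
  also have "\<dots> = (matrix_inv A ** A) ** B"
    by (simp add: matrix_mul_assoc)
  also have "\<dots> = B"
    using \<open>invertible A\<close> by (simp add: matrix_inv_inverse)
  finally show ?thesis .
qed

definition mat2 :: "'a \<Rightarrow> 'a \<Rightarrow> 'a \<Rightarrow> 'a \<Rightarrow> 'a::zero^2^2" where
  "mat2 a b c d = vector [vector [a, b], vector [c, d]]"

definition mat3 :: "'a \<Rightarrow> 'a \<Rightarrow> 'a \<Rightarrow> 'a \<Rightarrow> 'a \<Rightarrow> 'a \<Rightarrow> 'a \<Rightarrow> 'a \<Rightarrow> 'a \<Rightarrow> 'a::zero^3^3" where
  "mat3 a b c d e f g h i = vector [vector [a, b, c], vector [d, e, f], vector [g, h, i]]"

lemma mat2_nth [simp]:
  "mat2 a b c d $1$1 = a" "mat2 a b c d $1$2 = b" "mat2 a b c d $2$1 = c" "mat2 a b c d $2$2 = d"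
  by (simp_all add: mat2_def)

lemma mat3_nth [simp]:
  "mat3 a b c d e f g h i $1$1 = a" "mat3 a b c d e f g h i $1$2 = b" "mat3 a b c d e f g h i $1$3 = c"
  "mat3 a b c d e f g h i $2$1 = d" "mat3 a b c d e f g h i $2$2 = e" "mat3 a b c d e f g h i $2$3 = f"
  "mat3 a b c d e f g h i $3$1 = g" "mat3 a b c d e f g h i $3$2 = h" "mat3 a b c d e f g h i $3$3 = i"
  by (simp_all add: mat3_def)

lemma mat2_eta: "A = mat2 (A$1$1) (A$1$2) (A$2$1) (A$2$2)"
  by (simp add: vec_eq_iff forall_2)

lemma mat3_eta: "A = mat3 (A$1$1) (A$1$2) (A$1$3) (A$2$1) (A$2$2) (A$2$3) (A$3$1) (A$3$2) (A$3$3)"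
  by (simp add: vec_eq_iff forall_3)

lemma mat2_eq_iff: "mat2 a b c d = mat2 a' b' c' d' \<longleftrightarrow> a = a' \<and> b = b' \<and> c = c' \<and> d = d'"
  by (auto simp add: vec_eq_iff forall_2 mat2_def)

lemma mat3_eq_iff: "mat3 a b c d e f g h i = mat3 a' b' c' d' e' f' g' h' i' \<longleftrightarrow>
   a = a' \<and> b = b' \<and> c = c' \<and> d = d' \<and> e = e' \<and> f = f' \<and> g = g' \<and> h = h' \<and> i = i'"
  by (auto simp add: vec_eq_iff forall_3 mat3_def)

lemma mat2_mult:
  "mat2 a b c d ** mat2 a' b' c' d' =
     mat2 (a*a' + b*c') (a*b' + b*d') (c*a' + d*c') (c*b' + d*d')"
  by (simp add: vec_eq_iff forall_2 matrix_matrix_mult_def sum_2)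

lemma mat3_mult:
  "mat3 a b c d e f g h i ** mat3 a' b' c' d' e' f' g' h' i' =
     mat3 (a*a' + b*d' + c*g') (a*b' + b*e' + c*h') (a*c' + b*f' + c*i')
          (d*a' + e*d' + f*g') (d*b' + e*e' + f*h') (d*c' + e*f' + f*i')
          (g*a' + h*d' + i*g') (g*b' + h*e' + i*h') (g*c' + h*f' + i*i')"
  by (simp add: vec_eq_iff forall_3 matrix_matrix_mult_def sum_3)

lemma mat1_eq_mat2: "mat 1 = mat2 1 0 0 1"
  by (simp add: vec_eq_iff forall_2 mat_def)

lemma mat1_eq_mat3: "mat 1 = mat3 1 0 0 0 1 0 0 0 1"
  by (simp add: vec_eq_iff forall_3 mat_def)

lemma SLo_mat2_iff:
  "mat2 a b c d \<in> SLo \<longleftrightarrow> a \<in> Eis \<and> b \<in> Eis \<and> c \<in> Eis \<and> d \<in> Eis \<and> a*d - b*c = 1"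
  by (simp add: SLo_def forall_2 det_2 del: mat2_nth) (simp add: mat2_def)

lemma SLo_mat3_iff:
  "mat3 a b c d e f g h i \<in> SLo \<longleftrightarrow>
     a \<in> Eis \<and> b \<in> Eis \<and> c \<in> Eis \<and> d \<in> Eis \<and> e \<in> Eis \<and> f \<in> Eis \<and> g \<in> Eis \<and> h \<in> Eis \<and> i \<in> Eis \<and>
     a*e*i + b*f*g + c*d*h - a*f*h - b*d*i - c*e*g = 1"
  by (simp add: SLo_def forall_3 det_3 del: mat3_nth) (simp add: mat3_def)

lemma SLo_2x2_iff:
  fixes y :: "complex^2^2"
  shows "y \<in> SLo \<longleftrightarrow> y$1$1 \<in> Eis \<and> y$1$2 \<in> Eis \<and> y$2$1 \<in> Eis \<and> y$2$2 \<in> Eis \<and>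
    y$1$1 * y$2$2 - y$1$2 * y$2$1 = 1"
  using SLo_mat2_iff[of "y$1$1" "y$1$2" "y$2$1" "y$2$2"] by (simp flip: mat2_eta)

lemma matrix_inv_mat2:
  fixes a b c d :: "'a::comm_ring_1"
  assumes "a*d - b*c = 1"
  shows "matrix_inv (mat2 a b c d) = mat2 d (-b) (-c) a"
  by (rule matrix_inv_eqI) (use assms in \<open>simp_all add: mat2_mult mat1_eq_mat2 mat2_eq_iff algebra_simps\<close>)

lemma matrix_inv_SLo_2x2:
  fixes y :: "complex^2^2"
  assumes "y \<in> SLo"
  shows "matrix_inv y \<in> SLo" "y ** matrix_inv y = mat 1" "matrix_inv y ** y = mat 1"
proof -
  have "invertible y"
    using assms unfolding SLo_def invertible_det_nz by simp
  then show "y ** matrix_inv y = mat 1" "matrix_inv y ** y = mat 1"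
    by (simp_all add: matrix_inv_inverse)
  obtain a b c d where "y = mat2 a b c d"
    using mat2_eta by blast
  with assms show "matrix_inv y \<in> SLo"
    by (auto simp: SLo_mat2_iff matrix_inv_mat2 algebra_simps)
qed

lemma phi1_mat2: "phi1 (mat2 a b c d) = mat3 a b 0 c d 0 0 0 1"
  by (simp add: phi1_def mat3_def)

lemma phi2_mat2: "phi2 (mat2 a b c d) = mat3 1 0 0 0 a b 0 c d"
  by (simp add: phi2_def mat3_def)

lemma phi1_mult: "phi1 (y ** z) = phi1 y ** phi1 z"
proof -
  obtain a b c d a' b' c' d' where "y = mat2 a b c d" "z = mat2 a' b' c' d'"
    using mat2_eta by metis
  then show ?thesis
    by (simp add: phi1_mat2 mat2_mult mat3_mult)
qed

lemma phi2_mult: "phi2 (y ** z) = phi2 y ** phi2 z"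
proof -
  obtain a b c d a' b' c' d' where "y = mat2 a b c d" "z = mat2 a' b' c' d'"
    using mat2_eta by metis
  then show ?thesis
    by (simp add: phi2_mat2 mat2_mult mat3_mult)
qed

lemma phi1_mat1: "phi1 (mat 1) = mat 1"
  by (simp add: mat1_eq_mat2 mat1_eq_mat3 phi1_mat2)

lemma phi2_mat1: "phi2 (mat 1) = mat 1"
  by (simp add: mat1_eq_mat2 mat1_eq_mat3 phi2_mat2)

lemma phi1_SLo: "y \<in> SLo \<Longrightarrow> phi1 y \<in> SLo"
  by (subst (asm) mat2_eta, subst mat2_eta) (simp add: phi1_mat2 SLo_mat2_iff SLo_mat3_iff)

lemma phi2_SLo: "y \<in> SLo \<Longrightarrow> phi2 y \<in> SLo"
  by (subst (asm) mat2_eta, subst mat2_eta) (simp add: phi2_mat2 SLo_mat2_iff SLo_mat3_iff)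

definition Bo :: "(complex^3^3) set" where
  "Bo = {B \<in> SLo. B$2$1 = 0 \<and> B$3$1 = 0 \<and> B$3$2 = 0}"

lemma Bo_mat3_iff:
  "mat3 a b c 0 e f 0 0 i \<in> Bo \<longleftrightarrow>
     a \<in> Eis \<and> b \<in> Eis \<and> c \<in> Eis \<and> e \<in> Eis \<and> f \<in> Eis \<and> i \<in> Eis \<and> a * e * i = 1"
  unfolding Bo_def by (simp add: SLo_mat3_iff)

lemma BoE:
  assumes "B \<in> Bo"
  obtains a b c e f i where "B = mat3 a b c 0 e f 0 0 i"
    "a \<in> Eis" "b \<in> Eis" "c \<in> Eis" "e \<in> Eis" "f \<in> Eis" "i \<in> Eis" "a * e * i = 1"
proof -
  have "B = mat3 (B$1$1) (B$1$2) (B$1$3) 0 (B$2$2) (B$2$3) 0 0 (B$3$3)"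
    using assms mat3_eta[of B] unfolding Bo_def by simp
  with assms show ?thesis
    using that Bo_mat3_iff by metis
qed

lemma eis_unit_Bo_11: "B \<in> Bo \<Longrightarrow> eis_unit (B$1$1)"
  by (erule BoE) (auto simp: eis_unit_def mult.assoc)

lemma matrix_mult_Bo_first_column:
  fixes A :: "complex^3^3"
  assumes "B \<in> Bo"
  shows "(A ** B)$i$1 = A$i$1 * B$1$1"
  using assms unfolding Bo_def by (simp add: matrix_matrix_mult_def sum_3)

definition diag3 :: "'a \<Rightarrow> 'a \<Rightarrow> 'a \<Rightarrow> 'a::zero^3^3" where
  "diag3 i j k = mat3 i 0 0 0 j 0 0 0 k"

definition unipotent3 :: "'a \<Rightarrow> 'a \<Rightarrow> 'a \<Rightarrow> 'a::{zero,one}^3^3" where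
  "unipotent3 x y z = mat3 1 x y 0 1 z 0 0 1"

lemma unipotent3_mult:
  "unipotent3 x y z ** unipotent3 x' y' z' = unipotent3 (x + x') (y + x * z' + y') (z + z')"
  by (simp add: unipotent3_def mat3_mult mat3_eq_iff algebra_simps)

lemma diag3_mult_unipotent3:
  "diag3 i j k ** unipotent3 x y z = mat3 i (i * x) (i * y) 0 j (j * z) 0 0 k"
  by (simp add: diag3_def unipotent3_def mat3_mult)

lemma D3_iff:
  "d \<in> D3 \<longleftrightarrow> (\<exists>i j k. d = diag3 i j k \<and> i \<in> Eis \<and> j \<in> Eis \<and> k \<in> Eis \<and> i * j * k = 1)"
  unfolding D3_def diag3_def mat3_def by blast

lemma U3_iff:
  "u \<in> U3 \<longleftrightarrow> (\<exists>x y z. u = unipotent3 x y z \<and> x \<in> digits3 \<and> y \<in> digits3 \<and> z \<in> digits3)"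
  unfolding U3_def unipotent3_def mat3_def by blast

lemma Gamma_inf3_iff:
  "h \<in> Gamma_inf3 \<longleftrightarrow> (\<exists>x y z. h = unipotent3 x y z \<and> eis_dvd 3 x \<and> eis_dvd 3 y \<and> eis_dvd 3 z)"
proof
  assume h: "h \<in> Gamma_inf3"
  then have "h = unipotent3 (h$1$2) (h$1$3) (h$2$3)"
    unfolding Gamma_inf3_def unipotent3_def by (subst mat3_eta) simp
  moreover have "eis_dvd 3 (h$i$j - (if i = j then 1 else 0))" for i j
    using h unfolding Gamma_inf3_def Gamma3_def by blast
  from this[of 1 2] this[of 1 3] this[of 2 3]
  have "eis_dvd 3 (h$1$2)" "eis_dvd 3 (h$1$3)" "eis_dvd 3 (h$2$3)"
    by simp_all
  ultimately show "\<exists>x y z. h = unipotent3 x y z \<and> eis_dvd 3 x \<and> eis_dvd 3 y \<and> eis_dvd 3 z"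
    by blast
next
  assume "\<exists>x y z. h = unipotent3 x y z \<and> eis_dvd 3 x \<and> eis_dvd 3 y \<and> eis_dvd 3 z"
  then obtain x y z where h: "h = unipotent3 x y z" "eis_dvd 3 x" "eis_dvd 3 y" "eis_dvd 3 z"
    by blast
  then have "x \<in> Eis" "y \<in> Eis" "z \<in> Eis"
    using eis_dvd_imp_Eis by auto
  with h show "h \<in> Gamma_inf3"
    unfolding Gamma_inf3_def Gamma3_def unipotent3_def by (simp add: SLo_mat3_iff forall_3)
qed

lemma unipotent3_eq_U3_Gamma_inf3:
  assumes "x \<in> Eis" "y \<in> Eis" "z \<in> Eis"
  obtains u h where "u \<in> U3" "h \<in> Gamma_inf3" "unipotent3 x y z = u ** h"
proof -
  obtain \<alpha> \<gamma> where \<alpha>: "\<alpha> \<in> digits3" "eis_dvd 3 (x - \<alpha>)" and \<gamma>: "\<gamma> \<in> digits3" "eis_dvd 3 (z - \<gamma>)"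
    using assms digits3_exists by metis
  have "y - \<alpha> * (z - \<gamma>) \<in> Eis"
    using assms \<alpha> \<gamma> digits3_Eis by auto
  then obtain \<beta> where \<beta>: "\<beta> \<in> digits3" "eis_dvd 3 (y - \<alpha> * (z - \<gamma>) - \<beta>)"
    using digits3_exists by metis
  have "unipotent3 \<alpha> \<beta> \<gamma> \<in> U3"
    using \<alpha> \<beta> \<gamma> unfolding U3_iff by blast
  moreover have "unipotent3 (x - \<alpha>) (y - \<alpha> * (z - \<gamma>) - \<beta>) (z - \<gamma>) \<in> Gamma_inf3"
    using \<alpha> \<beta> \<gamma> unfolding Gamma_inf3_iff by blast
  moreover have "unipotent3 x y z = unipotent3 \<alpha> \<beta> \<gamma> ** unipotent3 (x - \<alpha>) (y - \<alpha> * (z - \<gamma>) - \<beta>) (z - \<gamma>)"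
    by (simp add: unipotent3_mult)
  ultimately show ?thesis
    using that by blast
qed

lemma U3_Gamma_inf3_unique:
  assumes "u \<in> U3" "h \<in> Gamma_inf3" "u' \<in> U3" "h' \<in> Gamma_inf3" "u ** h = u' ** h'"
  shows "u = u'"
proof -
  obtain \<alpha> \<beta> \<gamma> where u: "u = unipotent3 \<alpha> \<beta> \<gamma>" "\<alpha> \<in> digits3" "\<beta> \<in> digits3" "\<gamma> \<in> digits3"
    using assms(1) unfolding U3_iff by blast
  obtain \<alpha>' \<beta>' \<gamma>' where u': "u' = unipotent3 \<alpha>' \<beta>' \<gamma>'" "\<alpha>' \<in> digits3" "\<beta>' \<in> digits3" "\<gamma>' \<in> digits3"
    using assms(3) unfolding U3_iff by blast
  obtain p q r where h: "h = unipotent3 p q r" "eis_dvd 3 p" "eis_dvd 3 q" "eis_dvd 3 r"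
    using assms(2) unfolding Gamma_inf3_iff by blast
  obtain p' q' r' where h': "h' = unipotent3 p' q' r'" "eis_dvd 3 p'" "eis_dvd 3 q'" "eis_dvd 3 r'"
    using assms(4) unfolding Gamma_inf3_iff by blast
  have eq: "\<alpha> - \<alpha>' = p' - p" "\<gamma> - \<gamma>' = r' - r" "\<beta> - \<beta>' = \<alpha>' * r' - \<alpha> * r + q' - q"
    using assms(5) unfolding u h u' h' unipotent3_mult
    by (simp_all add: unipotent3_def mat3_eq_iff algebra_simps)
  have "eis_dvd 3 (\<alpha> - \<alpha>')" "eis_dvd 3 (\<gamma> - \<gamma>')"
    unfolding eq using h h' by (simp_all add: eis_dvd_diff)
  then have \<alpha>\<gamma>: "\<alpha> = \<alpha>'" "\<gamma> = \<gamma>'"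
    using u u' digits3_unique by auto
  have "\<beta> - \<beta>' = \<alpha> * (r' - r) + (q' - q)"
    unfolding eq \<alpha>\<gamma> by (simp add: algebra_simps)
  moreover have "eis_dvd 3 (\<alpha> * (r' - r) + (q' - q))"
    using h h' u(2) digits3_Eis by (simp add: eis_dvd_add eis_dvd_diff eis_dvd_mult_left)
  ultimately have "\<beta> = \<beta>'"
    using u u' digits3_unique by auto
  with u u' \<alpha>\<gamma> show ?thesis
    by simp
qed

lemma D3_U3_Gamma_inf3_form:
  assumes "d \<in> D3" "u \<in> U3" "h \<in> Gamma_inf3"
  obtains i j k x y z where "d = diag3 i j k" "u ** h = unipotent3 x y z"
    "i \<in> Eis" "j \<in> Eis" "k \<in> Eis" "i * j * k = 1" "x \<in> Eis" "y \<in> Eis" "z \<in> Eis"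
proof -
  obtain i j k where d: "d = diag3 i j k" "i \<in> Eis" "j \<in> Eis" "k \<in> Eis" "i * j * k = 1"
    using assms(1) unfolding D3_iff by blast
  obtain \<alpha> \<beta> \<gamma> where u: "u = unipotent3 \<alpha> \<beta> \<gamma>" "\<alpha> \<in> Eis" "\<beta> \<in> Eis" "\<gamma> \<in> Eis"
    using assms(2) digits3_Eis unfolding U3_iff by blast
  obtain p q r where h: "h = unipotent3 p q r" "p \<in> Eis" "q \<in> Eis" "r \<in> Eis"
    using assms(3) eis_dvd_imp_Eis[OF _ Eis_numeral] unfolding Gamma_inf3_iff by blast
  have "u ** h = unipotent3 (\<alpha> + p) (\<beta> + \<alpha> * r + q) (\<gamma> + r)"
    unfolding u h by (simp add: unipotent3_mult)
  with d u h show ?thesis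
    using that by simp
qed

lemma D3_U3_Gamma_inf3_in_Bo:
  assumes "d \<in> D3" "u \<in> U3" "h \<in> Gamma_inf3"
  shows "d ** u ** h \<in> Bo"
  using assms
proof (rule D3_U3_Gamma_inf3_form)
  fix i j k x y z
  assume "d = diag3 i j k" "u ** h = unipotent3 x y z"
    "i \<in> Eis" "j \<in> Eis" "k \<in> Eis" "i * j * k = 1" "x \<in> Eis" "y \<in> Eis" "z \<in> Eis"
  then show ?thesis
    by (simp add: matrix_mul_assoc[symmetric] diag3_mult_unipotent3 Bo_mat3_iff)
qed

lemma Bo_eq_D3_U3_Gamma_inf3:
  assumes "B \<in> Bo"
  obtains d u h where "d \<in> D3" "u \<in> U3" "h \<in> Gamma_inf3" "B = d ** u ** h"
proof -
  obtain a b c e f i where B: "B = mat3 a b c 0 e f 0 0 i"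
    and Eis: "a \<in> Eis" "b \<in> Eis" "c \<in> Eis" "e \<in> Eis" "f \<in> Eis" "i \<in> Eis" and det: "a * e * i = 1"
    using assms by (rule BoE)
  have d: "diag3 a e i \<in> D3"
    using Eis det unfolding D3_iff by blast
  have "b * (e * i) \<in> Eis" "c * (e * i) \<in> Eis" "f * (a * i) \<in> Eis"
    using Eis by simp_all
  then obtain u h where uh: "u \<in> U3" "h \<in> Gamma_inf3"
    "unipotent3 (b * (e * i)) (c * (e * i)) (f * (a * i)) = u ** h"
    by (rule unipotent3_eq_U3_Gamma_inf3)
  have "a * (b * (e * i)) = b * (a * e * i)" "a * (c * (e * i)) = c * (a * e * i)"
    "e * (f * (a * i)) = f * (a * e * i)"
    by (simp_all add: ac_simps)
  then have cancel: "a * (b * (e * i)) = b" "a * (c * (e * i)) = c" "e * (f * (a * i)) = f"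
    unfolding det by simp_all
  have "B = diag3 a e i ** unipotent3 (b * (e * i)) (c * (e * i)) (f * (a * i))"
    unfolding B diag3_mult_unipotent3 cancel ..
  with d uh show ?thesis
    using that by (simp add: matrix_mul_assoc)
qed

lemma D3_U3_Gamma_inf3_unique:
  assumes "d \<in> D3" "u \<in> U3" "h \<in> Gamma_inf3" "d' \<in> D3" "u' \<in> U3" "h' \<in> Gamma_inf3"
    and eq: "d ** u ** h = d' ** u' ** h'"
  shows "d = d' \<and> u = u'"
proof -
  obtain i j k x y z where d: "d = diag3 i j k" and uh: "u ** h = unipotent3 x y z"
    and "i * j * k = 1"
    using assms(1-3) by (rule D3_U3_Gamma_inf3_form)
  obtain i' j' k' x' y' z' where d': "d' = diag3 i' j' k'" and uh': "u' ** h' = unipotent3 x' y' z'"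
    using assms(4-6) by (rule D3_U3_Gamma_inf3_form)
  have "i \<noteq> 0" "j \<noteq> 0"
    using \<open>i * j * k = 1\<close> by auto
  with eq have "d = d'" "u ** h = u' ** h'"
    unfolding matrix_mul_assoc[symmetric] d d' uh uh' by (auto simp: diag3_mult_unipotent3 mat3_eq_iff)
  then show ?thesis
    using assms U3_Gamma_inf3_unique by blast
qed

lemma Yo_mat2_iff:
  "mat2 a b c d \<in> Yo R S \<longleftrightarrow>
     a \<in> Eis \<and> b \<in> Eis \<and> c \<in> Eis \<and> d \<in> Eis \<and> a * d - b * c = 1 \<and>
     (c \<in> R \<and> a \<in> S c \<or> a = 1 \<and> b = 0 \<and> c = 0 \<and> d = 1)"
  unfolding Yo_def by (auto simp: SLo_mat2_iff mat1_eq_mat2 mat2_eq_iff)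

lemma YoE:
  assumes "y \<in> Yo R S"
  obtains a b c d where "y = mat2 a b c d" "a \<in> Eis" "b \<in> Eis" "c \<in> Eis" "d \<in> Eis" "a * d - b * c = 1"
    "c \<in> R \<and> a \<in> S c \<or> a = 1 \<and> b = 0 \<and> c = 0 \<and> d = 1"
  using assms Yo_mat2_iff mat2_eta by metis

lemma Yo_SLo: "y \<in> Yo R S \<Longrightarrow> y \<in> SLo"
  by (erule YoE) (simp add: SLo_mat2_iff)

lemma Yo_eq_mat1_iff:
  assumes "unit_reps R" "y \<in> Yo R S"
  shows "y = mat 1 \<longleftrightarrow> y$2$1 = 0"
  using assms(2)
proof (rule YoE)
  fix a b c d
  assume "y = mat2 a b c d" "c \<in> R \<and> a \<in> S c \<or> a = 1 \<and> b = 0 \<and> c = 0 \<and> d = 1"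
  moreover have "0 \<notin> R"
    using assms(1) unfolding unit_reps_def by auto
  ultimately show ?thesis
    by (auto simp: mat1_eq_mat2 mat2_eq_iff)
qed

text \<open>Two elements of SL2 with the same bottom row differ by a unipotent factor on the left,
  so their upper left entries are congruent modulo the lower left one.\<close>
lemma Yo_eq_of_bottom_row:
  assumes R: "unit_reps R" "residue_reps R S" and y: "y \<in> Yo R S" "y' \<in> Yo R S"
    and bottom: "y$2$1 = y'$2$1" "y$2$2 = y'$2$2"
  shows "y = y'"
proof (cases "y$2$1 = 0")
  case True
  with R y bottom show ?thesis
    using Yo_eq_mat1_iff by metis
next
  case False
  obtain a b c d where y_eq: "y = mat2 a b c d" and "a \<in> Eis" "b \<in> Eis" and det: "a * d - b * c = 1"
    and a: "c \<in> R" "a \<in> S c"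
    by (rule YoE[OF y(1)]) (use False in auto)
  obtain a' b' where y'_eq: "y' = mat2 a' b' c d" and "a' \<in> Eis" "b' \<in> Eis" and det': "a' * d - b' * c = 1"
    and a': "a' \<in> S c"
    by (rule YoE[OF y(2)]) (use False bottom in \<open>auto simp: y_eq\<close>)
  define k where "k = a * b' - a' * b"
  have "a' = a' * (a * d - b * c)"
    using det by simp
  also have "\<dots> = a * (a' * d - b' * c) + c * k"
    unfolding k_def by (simp add: algebra_simps)
  finally have "a' - a = c * k"
    using det' by simp
  moreover have "k \<in> Eis"
    unfolding k_def using \<open>a \<in> Eis\<close> \<open>b \<in> Eis\<close> \<open>a' \<in> Eis\<close> \<open>b' \<in> Eis\<close> by simp
  ultimately have "eis_dvd c (a' - a)"
    by (simp add: eis_dvd_triv_left)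
  with R a a' have "a' = a"
    using residue_reps_unique by blast
  with det det' have "(b' - b) * c = 0"
    by algebra
  with False \<open>a' = a\<close> show ?thesis
    unfolding y_eq y'_eq by simp
qed

lemma Yo_exists_bottom_row:
  assumes R: "unit_reps R" "residue_reps R S" and c: "c \<in> R"
    and "a \<in> Eis" "b \<in> Eis" "d \<in> Eis" and det: "a * d - b * c = 1"
  obtains y where "y \<in> Yo R S" "y$2$1 = c" "y$2$2 = d"
proof -
  obtain a0 where a0: "a0 \<in> S c" "eis_dvd c (a - a0)"
    using R(2) c \<open>a \<in> Eis\<close> unfolding residue_reps_def by blast
  then obtain k where k: "k \<in> Eis" "a = a0 + c * k"
    unfolding eis_dvd_def by (auto simp: algebra_simps)
  have "c \<in> Eis" "a0 \<in> Eis"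
    using R c a0 unfolding unit_reps_def residue_reps_def by auto
  moreover have "a0 * d - (b - k * d) * c = 1"
    using det unfolding k(2) by (simp add: algebra_simps)
  ultimately have "mat2 a0 (b - k * d) c d \<in> Yo R S"
    using assms k a0 unfolding Yo_mat2_iff by auto
  then show ?thesis
    using that by simp
qed

lemma Yo_exists_unit_multiple_bottom_row:
  assumes R: "unit_reps R" "residue_reps R S"
    and "a \<in> Eis" "b \<in> Eis" "c \<in> Eis" "d \<in> Eis" and det: "a * d - b * c = 1"
  obtains y e where "y \<in> Yo R S" "eis_unit e" "y$2$1 = e * c" "y$2$2 = e * d"
proof (cases "c = 0")
  case True
  then have "mat 1 \<in> Yo R S" "eis_unit a" "(mat 1 :: complex^2^2)$2$1 = a * c" "(mat 1 :: complex^2^2)$2$2 = a * d"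
    using assms unfolding Yo_def eis_unit_def by (auto simp: mat1_eq_mat2 mult.commute)
  then show ?thesis
    using that by blast
next
  case False
  obtain u r where u: "eis_unit u" "r \<in> R" "c = u * r"
    by (rule unit_reps_factor[OF R(1) \<open>c \<in> Eis\<close> False])
  then have "inverse u \<in> Eis" "u \<noteq> 0" "u \<in> Eis"
    unfolding eis_unit_iff by auto
  have "(a * u) * (inverse u * d) - (b * u) * r = 1"
    using det \<open>u \<noteq> 0\<close> unfolding u(3) by (simp add: field_simps)
  with assms u \<open>inverse u \<in> Eis\<close> \<open>u \<in> Eis\<close> obtain y where "y \<in> Yo R S" "y$2$1 = r" "y$2$2 = inverse u * d"
    by (metis Eis_mult Yo_exists_bottom_row)
  moreover have "eis_unit (inverse u)" "r = inverse u * c"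
    using u \<open>u \<noteq> 0\<close> unfolding eis_unit_iff by auto
  ultimately show ?thesis
    using that by auto
qed

lemma Yo_bottom_row_unit_eq:
  assumes R: "unit_reps R" and y: "y \<in> Yo R S" "y' \<in> Yo R S" and w: "eis_unit w"
    and bottom: "y'$2$1 = w * y$2$1" "y'$2$2 = w * y$2$2"
  shows "w = 1"
proof (cases "y$2$1 = 0")
  case True
  with R y bottom have "y = mat 1" "y' = mat 1"
    using Yo_eq_mat1_iff by auto
  with bottom show ?thesis
    by (simp add: mat1_eq_mat2)
next
  case False
  have "w \<noteq> 0"
    using w unfolding eis_unit_iff by simp
  with R y False bottom have "y$2$1 \<in> R" "y'$2$1 \<in> R"
    unfolding Yo_def by (auto simp: mat1_eq_mat2)
  with R w bottom have "y'$2$1 = y$2$1"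
    using unit_reps_unit_mult_eq by blast
  with False bottom show ?thesis
    by simp
qed

definition phi_inv :: "complex^2^2 \<Rightarrow> complex^2^2 \<Rightarrow> complex^3^3" where
  "phi_inv y1 y2 = phi2 (matrix_inv y1) ** phi1 (matrix_inv y2)"

lemma piece_eq: "piece (y1, y2, d, u) = (\<lambda>h. phi_inv y1 y2 ** (d ** u ** h)) ` Gamma_inf3"
  by (simp add: piece_def lcoset_def phi_inv_def matrix_mul_assoc)

lemma phi_inv_mat2:
  assumes "a1 * d1 - b1 * c1 = 1" "a2 * d2 - b2 * c2 = 1"
  shows "phi_inv (mat2 a1 b1 c1 d1) (mat2 a2 b2 c2 d2) =
    mat3 d2 (-b2) 0 (-(d1 * c2)) (d1 * a2) (-b1) (c1 * c2) (-(c1 * a2)) a1"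
  unfolding phi_inv_def matrix_inv_mat2[OF assms(1)] matrix_inv_mat2[OF assms(2)]
  by (simp add: phi1_mat2 phi2_mat2 mat3_mult)

lemma phi_inv_first_column:
  assumes "y1 \<in> SLo" "y2 \<in> SLo"
  shows "(phi_inv y1 y2)$1$1 = y2$2$2" "(phi_inv y1 y2)$2$1 = -(y1$2$2 * y2$2$1)"
    "(phi_inv y1 y2)$3$1 = y1$2$1 * y2$2$1"
proof -
  obtain a1 b1 c1 d1 a2 b2 c2 d2 where y: "y1 = mat2 a1 b1 c1 d1" "y2 = mat2 a2 b2 c2 d2"
    using mat2_eta by metis
  with assms have "a1 * d1 - b1 * c1 = 1" "a2 * d2 - b2 * c2 = 1"
    by (simp_all add: SLo_mat2_iff)
  then show "(phi_inv y1 y2)$1$1 = y2$2$2" "(phi_inv y1 y2)$2$1 = -(y1$2$2 * y2$2$1)"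
    "(phi_inv y1 y2)$3$1 = y1$2$1 * y2$2$1"
    unfolding y by (simp_all add: phi_inv_mat2)
qed

lemma phi_inv_SLo: "y1 \<in> SLo \<Longrightarrow> y2 \<in> SLo \<Longrightarrow> phi_inv y1 y2 \<in> SLo"
  unfolding phi_inv_def by (intro SLo_mult phi1_SLo phi2_SLo matrix_inv_SLo_2x2)

lemma phi_inv_inverse:
  assumes "y1 \<in> SLo" "y2 \<in> SLo"
  shows "phi_inv y1 y2 ** (phi1 y2 ** phi2 y1) = mat 1" "(phi1 y2 ** phi2 y1) ** phi_inv y1 y2 = mat 1"
proof -
  have "phi_inv y1 y2 ** (phi1 y2 ** phi2 y1) = phi2 (matrix_inv y1) ** (phi1 (matrix_inv y2 ** y2) ** phi2 y1)"
    unfolding phi_inv_def phi1_mult by (simp add: matrix_mul_assoc)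
  also have "\<dots> = phi2 (matrix_inv y1 ** y1)"
    unfolding phi2_mult using assms by (simp add: matrix_inv_SLo_2x2 phi1_mat1)
  finally show "phi_inv y1 y2 ** (phi1 y2 ** phi2 y1) = mat 1"
    using assms by (simp add: matrix_inv_SLo_2x2 phi2_mat1)
  have "(phi1 y2 ** phi2 y1) ** phi_inv y1 y2 = phi1 y2 ** (phi2 (y1 ** matrix_inv y1) ** phi1 (matrix_inv y2))"
    unfolding phi_inv_def phi2_mult by (simp add: matrix_mul_assoc)
  also have "\<dots> = phi1 (y2 ** matrix_inv y2)"
    unfolding phi1_mult using assms by (simp add: matrix_inv_SLo_2x2 phi2_mat1)
  finally show "(phi1 y2 ** phi2 y1) ** phi_inv y1 y2 = mat 1"
    using assms by (simp add: matrix_inv_SLo_2x2 phi1_mat1)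
qed

lemma Delta10_mult_Bo:
  assumes A: "A \<in> Delta10" and B: "B \<in> Bo"
  shows "A ** B \<in> Delta10"
proof -
  obtain b11 b12 b13 b22 b23 b33 where B_eq: "B = mat3 b11 b12 b13 0 b22 b23 0 0 b33"
    and "b11 * b22 * b33 = 1"
    using B by (rule BoE)
  then have "b11 \<noteq> 0"
    by auto
  have "A ** B \<in> SLo"
    using A B unfolding Delta10_def Bo_def by (auto intro: SLo_mult)
  moreover have "(A ** B)$2$1 = A$2$1 * b11" "(A ** B)$3$1 = A$3$1 * b11"
    "(A ** B)$2$2 = A$2$1 * b12 + A$2$2 * b22" "(A ** B)$3$2 = A$3$1 * b12 + A$3$2 * b22"
    unfolding B_eq by (simp_all add: matrix_matrix_mult_def sum_3)
  moreover have "(A$2$1 * b11) * (A$3$1 * b12 + A$3$2 * b22) - (A$2$1 * b12 + A$2$2 * b22) * (A$3$1 * b11)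
      = b11 * b22 * (A$2$1 * A$3$2 - A$2$2 * A$3$1)"
    by (simp add: algebra_simps)
  ultimately show ?thesis
    using A \<open>b11 \<noteq> 0\<close> unfolding Delta10_def by auto
qed

lemma phi_inv_in_Delta10:
  assumes "y1 \<in> SLo" "y2 \<in> SLo" "y2$2$1 \<noteq> 0"
  shows "phi_inv y1 y2 \<in> Delta10"
proof -
  obtain a1 b1 c1 d1 a2 b2 c2 d2 where y: "y1 = mat2 a1 b1 c1 d1" "y2 = mat2 a2 b2 c2 d2"
    using mat2_eta by metis
  with assms have det: "a1 * d1 - b1 * c1 = 1" "a2 * d2 - b2 * c2 = 1" and "c2 \<noteq> 0"
    by (simp_all add: SLo_mat2_iff)
  then have "d1 * c2 \<noteq> 0 \<or> c1 * c2 \<noteq> 0"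
    by auto
  moreover have "phi_inv y1 y2 \<in> SLo"
    using assms by (simp add: phi_inv_SLo)
  ultimately show ?thesis
    unfolding Delta10_def y phi_inv_mat2[OF det] by auto
qed

lemma SLo_first_column_coprime:
  fixes A :: "complex^3^3"
  assumes "A \<in> SLo"
  obtains r1 r2 r3 where "r1 \<in> Eis" "r2 \<in> Eis" "r3 \<in> Eis" "r1 * A$1$1 + r2 * A$2$1 + r3 * A$3$1 = 1"
proof
  show "A$2$2 * A$3$3 - A$2$3 * A$3$2 \<in> Eis" "A$1$3 * A$3$2 - A$1$2 * A$3$3 \<in> Eis"
    "A$1$2 * A$2$3 - A$1$3 * A$2$2 \<in> Eis"
    using assms unfolding SLo_def by auto
  show "(A$2$2 * A$3$3 - A$2$3 * A$3$2) * A$1$1 + (A$1$3 * A$3$2 - A$1$2 * A$3$3) * A$2$1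
      + (A$1$2 * A$2$3 - A$1$3 * A$2$2) * A$3$1 = 1"
    using assms unfolding SLo_def det_3 by (simp add: algebra_simps)
qed

text \<open>The third row of the adjugate of \<open>A\<close> is \<open>(0, p, q)\<close>; it is orthogonal to the first column
  of \<open>A\<close> and has scalar product 1 with the third one.\<close>
lemma Delta10_lower_first_column:
  fixes A :: "complex^3^3"
  assumes "A \<in> SLo" and minor: "A$2$1 * A$3$2 - A$2$2 * A$3$1 = 0"
  obtains a b c d g where "a \<in> Eis" "b \<in> Eis" "c \<in> Eis" "d \<in> Eis" "g \<in> Eis" "a * d - b * c = 1"
    "A$2$1 = - (g * d)" "A$3$1 = g * c"
proof -
  define p where "p = A$1$2 * A$3$1 - A$1$1 * A$3$2"
  define q where "q = A$1$1 * A$2$2 - A$1$2 * A$2$1"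
  define g where "g = A$3$1 * A$2$3 - A$2$1 * A$3$3"
  have det: "det A = 1" and Eis: "\<And>i j. A$i$j \<in> Eis"
    using assms(1) unfolding SLo_def by auto
  have "p * A$2$1 + q * A$3$1 = - A$1$1 * (A$2$1 * A$3$2 - A$2$2 * A$3$1)"
    unfolding p_def q_def by (simp add: algebra_simps)
  then have orth: "p * A$2$1 + q * A$3$1 = 0"
    using minor by simp
  have "p * A$2$3 + q * A$3$3 = det A - A$1$3 * (A$2$1 * A$3$2 - A$2$2 * A$3$1)"
    unfolding p_def q_def det_3 by (simp add: algebra_simps)
  then have one: "p * A$2$3 + q * A$3$3 = 1"
    using minor det by simp
  have "- (g * q) = A$2$1 * (p * A$2$3 + q * A$3$3) - A$2$3 * (p * A$2$1 + q * A$3$1)"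
    "g * p = A$3$1 * (p * A$2$3 + q * A$3$3) - A$3$3 * (p * A$2$1 + q * A$3$1)"
    unfolding g_def by (simp_all add: algebra_simps)
  then have "A$2$1 = - (g * q)" "A$3$1 = g * p"
    unfolding orth one by simp_all
  moreover have "A$3$3 * q - (- A$2$3) * p = 1"
    using one by (simp add: algebra_simps)
  moreover have "p \<in> Eis" "q \<in> Eis" "g \<in> Eis" "A$3$3 \<in> Eis" "- A$2$3 \<in> Eis"
    unfolding p_def q_def g_def using Eis by simp_all
  ultimately show ?thesis
    using that by blast
qed

lemma Delta10_first_column_form:
  assumes R: "unit_reps R" "residue_reps R S" and A: "A \<in> Delta10"
  obtains y1 y2 \<mu> where "y1 \<in> Yo R S" "y2 \<in> Yo R S" "y2$2$1 \<noteq> 0" "\<mu> \<noteq> 0"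
    "A$1$1 = \<mu> * y2$2$2" "A$2$1 = - (\<mu> * (y1$2$2 * y2$2$1))" "A$3$1 = \<mu> * (y1$2$1 * y2$2$1)"
proof -
  have SL: "A \<in> SLo" and nz: "A$2$1 \<noteq> 0 \<or> A$3$1 \<noteq> 0"
    and minor: "A$2$1 * A$3$2 - A$2$2 * A$3$1 = 0"
    using A unfolding Delta10_def by auto
  obtain a b c d g where "a \<in> Eis" "b \<in> Eis" "c \<in> Eis" "d \<in> Eis" "g \<in> Eis" "a * d - b * c = 1"
    and col: "A$2$1 = - (g * d)" "A$3$1 = g * c"
    by (rule Delta10_lower_first_column[OF SL minor])
  then obtain y1 e where y1: "y1 \<in> Yo R S" "eis_unit e" "y1$2$1 = e * c" "y1$2$2 = e * d"
    using Yo_exists_unit_multiple_bottom_row[OF R] by metis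
  define s where "s = g * inverse e"
  have "e \<noteq> 0" "inverse e \<in> Eis"
    using y1(2) unfolding eis_unit_iff by auto
  then have col1: "A$2$1 = - (s * y1$2$2)" "A$3$1 = s * y1$2$1"
    unfolding col s_def y1 by (simp_all add: field_simps)
  have "s \<in> Eis" "s \<noteq> 0"
    using \<open>g \<in> Eis\<close> \<open>inverse e \<in> Eis\<close> nz col1 unfolding s_def by auto
  then obtain \<mu> c2 where \<mu>: "eis_unit \<mu>" "c2 \<in> R" "s = \<mu> * c2"
    using R(1) by (metis unit_reps_factor)
  then have \<mu>': "\<mu> \<noteq> 0" "inverse \<mu> \<in> Eis" "\<mu> \<in> Eis" "c2 \<in> Eis" "c2 \<noteq> 0"
    using R(1) unfolding eis_unit_iff unit_reps_def by auto
  obtain r1 r2 r3 where r: "r1 \<in> Eis" "r2 \<in> Eis" "r3 \<in> Eis" "r1 * A$1$1 + r2 * A$2$1 + r3 * A$3$1 = 1"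
    using SL by (rule SLo_first_column_coprime)
  define d2 where "d2 = inverse \<mu> * A$1$1"
  have "(r1 * \<mu>) * d2 - (\<mu> * (r2 * y1$2$2 - r3 * y1$2$1)) * c2 = 1"
    using r(4) \<open>\<mu> \<noteq> 0\<close> unfolding col1 \<mu>(3) d2_def by (simp add: field_simps)
  moreover have "r1 * \<mu> \<in> Eis" "\<mu> * (r2 * y1$2$2 - r3 * y1$2$1) \<in> Eis" "d2 \<in> Eis"
    using r \<mu>' y1(1) SL Yo_SLo unfolding d2_def SLo_def SLo_2x2_iff by auto
  ultimately obtain y2 where y2: "y2 \<in> Yo R S" "y2$2$1 = c2" "y2$2$2 = d2"
    using Yo_exists_bottom_row[OF R \<mu>(2)] by metis
  have "A$1$1 = \<mu> * y2$2$2"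
    using \<open>\<mu> \<noteq> 0\<close> unfolding y2 d2_def by simp
  moreover have "A$2$1 = - (\<mu> * (y1$2$2 * y2$2$1))" "A$3$1 = \<mu> * (y1$2$1 * y2$2$1)"
    unfolding col1 \<mu>(3) y2 by (simp_all add: ac_simps)
  ultimately show ?thesis
    using that y1(1) y2 \<mu>' by blast
qed

lemma phi_inv_inverse_mult_in_Bo:
  assumes "y1 \<in> SLo" "y2 \<in> SLo" "A \<in> SLo" and minor: "A$2$1 * A$3$2 - A$2$2 * A$3$1 = 0"
    and "\<mu> \<noteq> 0" "y2$2$1 \<noteq> 0"
    and col: "A$1$1 = \<mu> * y2$2$2" "A$2$1 = - (\<mu> * (y1$2$2 * y2$2$1))" "A$3$1 = \<mu> * (y1$2$1 * y2$2$1)"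
  shows "phi1 y2 ** phi2 y1 ** A \<in> Bo"
proof -
  obtain a1 b1 c1 d1 a2 b2 c2 d2 where y: "y1 = mat2 a1 b1 c1 d1" "y2 = mat2 a2 b2 c2 d2"
    using mat2_eta by metis
  with assms have det: "a1 * d1 - b1 * c1 = 1" and "c2 \<noteq> 0"
    by (simp_all add: SLo_mat2_iff)
  let ?B = "phi1 y2 ** phi2 y1 ** A"
  have "?B \<in> SLo"
    using assms by (simp add: SLo_mult phi1_SLo phi2_SLo)
  moreover have "?B$2$1 = \<mu> * c2 * d2 * (1 - (a1 * d1 - b1 * c1))" "?B$3$1 = 0"
    using col unfolding y by (simp_all add: phi1_mat2 phi2_mat2 mat3_mult matrix_matrix_mult_def sum_3 algebra_simps)
  moreover have "?B$3$2 = c1 * A$2$2 + d1 * A$3$2"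
    unfolding y by (simp add: phi1_mat2 phi2_mat2 mat3_mult matrix_matrix_mult_def sum_3)
  moreover have "- (\<mu> * c2) * (c1 * A$2$2 + d1 * A$3$2) = A$2$1 * A$3$2 - A$2$2 * A$3$1"
    using col unfolding y by (simp add: algebra_simps)
  ultimately show ?thesis
    using minor det \<open>\<mu> \<noteq> 0\<close> \<open>c2 \<noteq> 0\<close> unfolding Bo_def by simp
qed

lemma Delta10_decompose:
  assumes R: "unit_reps R" "residue_reps R S" and A: "A \<in> Delta10"
  obtains y1 y2 B where "y1 \<in> Yo R S" "y2 \<in> Yo R S" "y2 \<noteq> mat 1" "B \<in> Bo" "A = phi_inv y1 y2 ** B"
proof -
  obtain y1 y2 \<mu> where y: "y1 \<in> Yo R S" "y2 \<in> Yo R S" "y2$2$1 \<noteq> 0" "\<mu> \<noteq> 0"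
    and col: "A$1$1 = \<mu> * y2$2$2" "A$2$1 = - (\<mu> * (y1$2$2 * y2$2$1))" "A$3$1 = \<mu> * (y1$2$1 * y2$2$1)"
    using R A by (rule Delta10_first_column_form)
  have SL: "y1 \<in> SLo" "y2 \<in> SLo"
    using y Yo_SLo by auto
  have "A \<in> SLo" "A$2$1 * A$3$2 - A$2$2 * A$3$1 = 0"
    using A unfolding Delta10_def by auto
  then have "phi1 y2 ** phi2 y1 ** A \<in> Bo"
    using SL y(3,4) col by (intro phi_inv_inverse_mult_in_Bo)
  moreover have "phi_inv y1 y2 ** (phi1 y2 ** phi2 y1 ** A) = (phi_inv y1 y2 ** (phi1 y2 ** phi2 y1)) ** A"
    by (simp only: matrix_mul_assoc)
  then have "A = phi_inv y1 y2 ** (phi1 y2 ** phi2 y1 ** A)"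
    using SL by (simp add: phi_inv_inverse)
  moreover have "y2 \<noteq> mat 1"
    using R(1) y Yo_eq_mat1_iff by blast
  ultimately show ?thesis
    using that y by blast
qed

text \<open>The lower left entries of \<open>y2\<close> and \<open>y2'\<close> divide each other since the bottom rows of \<open>y1\<close>
  and \<open>y1'\<close> are primitive; once they agree, the normalisation of \<open>Y(o)\<close> forces \<open>w = 1\<close>.\<close>
lemma phi_inv_first_column_unique:
  assumes R: "unit_reps R" "residue_reps R S"
    and y: "y1 \<in> Yo R S" "y2 \<in> Yo R S" "y1' \<in> Yo R S" "y2' \<in> Yo R S"
    and c2: "y2$2$1 \<noteq> 0" "y2'$2$1 \<noteq> 0" and w: "eis_unit w"
    and col: "w * y2$2$2 = y2'$2$2" "w * (y1$2$2 * y2$2$1) = y1'$2$2 * y2'$2$1"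
      "w * (y1$2$1 * y2$2$1) = y1'$2$1 * y2'$2$1"
  shows "y1 = y1' \<and> y2 = y2'"
proof -
  obtain a1 b1 c1 d1 where y1: "y1 = mat2 a1 b1 c1 d1" "a1 \<in> Eis" "b1 \<in> Eis" "c1 \<in> Eis" "d1 \<in> Eis"
    "a1 * d1 - b1 * c1 = 1"
    using y(1) by (rule YoE)
  obtain a1' b1' c1' d1' where y1': "y1' = mat2 a1' b1' c1' d1'" "a1' \<in> Eis" "b1' \<in> Eis" "c1' \<in> Eis"
    "d1' \<in> Eis" "a1' * d1' - b1' * c1' = 1"
    using y(3) by (rule YoE)
  define c2 c2' where "c2 = y2$2$1" and "c2' = y2'$2$1"
  have "c2 \<in> R" "c2' \<in> R"
    using y c2 unfolding c2_def c2'_def Yo_def by (auto simp: mat1_eq_mat2)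
  have w': "w \<in> Eis" "w \<noteq> 0" "inverse w \<in> Eis"
    using w unfolding eis_unit_iff by auto
  have col': "c2' * c1' = c2 * (w * c1)" "c2' * d1' = c2 * (w * d1)"
    using col(2,3) unfolding y1 y1' c2_def c2'_def by (simp_all add: ac_simps)
  then have "eis_dvd c2 (c2' * c1')" "eis_dvd c2 (c2' * d1')"
    using w' y1 by (simp_all add: eis_dvd_triv_left)
  then have "eis_dvd c2 c2'"
    by (rule eis_dvd_of_coprime_multiples[OF y1'(2,3,6)])
  moreover have "c2 * c1 = c2' * (inverse w * c1')" "c2 * d1 = c2' * (inverse w * d1')"
    using col' w' by (simp_all add: field_simps)
  then have "eis_dvd c2' (c2 * c1)" "eis_dvd c2' (c2 * d1)"
    using w' y1' by (simp_all add: eis_dvd_triv_left)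
  then have "eis_dvd c2' c2"
    by (rule eis_dvd_of_coprime_multiples[OF y1(2,3,6)])
  ultimately have "c2' = c2"
    using R(1) \<open>c2 \<in> R\<close> \<open>c2' \<in> R\<close> unit_reps_dvd_antisym by metis
  with col' c2 have bottom1: "y1'$2$1 = w * y1$2$1" "y1'$2$2 = w * y1$2$2"
    unfolding y1 y1' c2_def by simp_all
  with R(1) y(1,3) w have "w = 1"
    by (rule Yo_bottom_row_unit_eq)
  with R y bottom1 col(1) \<open>c2' = c2\<close> show ?thesis
    unfolding c2_def c2'_def using Yo_eq_of_bottom_row by auto
qed

lemma phi_inv_Bo_unique:
  assumes R: "unit_reps R" "residue_reps R S"
    and y: "y1 \<in> Yo R S" "y2 \<in> Yo R S" "y1' \<in> Yo R S" "y2' \<in> Yo R S" "y2 \<noteq> mat 1" "y2' \<noteq> mat 1"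
    and B: "B \<in> Bo" "B' \<in> Bo" and eq: "phi_inv y1 y2 ** B = phi_inv y1' y2' ** B'"
  shows "y1 = y1' \<and> y2 = y2' \<and> B = B'"
proof -
  have SL: "y1 \<in> SLo" "y2 \<in> SLo" "y1' \<in> SLo" "y2' \<in> SLo"
    using y Yo_SLo by auto
  have c2: "y2$2$1 \<noteq> 0" "y2'$2$1 \<noteq> 0"
    using R(1) y Yo_eq_mat1_iff by auto
  define w where "w = B$1$1 * inverse (B'$1$1)"
  have units: "eis_unit (B$1$1)" "eis_unit (B'$1$1)"
    using B eis_unit_Bo_11 by auto
  then have "eis_unit w"
    unfolding w_def by (simp add: eis_unit_mult eis_unit_inverse)
  have "B'$1$1 \<noteq> 0"
    using units unfolding eis_unit_iff by simp
  have "B$1$1 * (phi_inv y1 y2)$i$1 = B'$1$1 * (phi_inv y1' y2')$i$1" for i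
    using arg_cong[OF eq, of "\<lambda>M. M$i$1"] B by (simp add: matrix_mult_Bo_first_column mult.commute)
  then have "w * (phi_inv y1 y2)$i$1 = (phi_inv y1' y2')$i$1" for i
    using \<open>B'$1$1 \<noteq> 0\<close> unfolding w_def by (simp add: field_simps)
  from this[of 1] this[of 2] this[of 3]
  have "y1 = y1' \<and> y2 = y2'"
    using SL by (intro phi_inv_first_column_unique[OF R y(1-4) c2 \<open>eis_unit w\<close>]) (simp_all add: phi_inv_first_column)
  moreover have "B = B'"
    using arg_cong[OF eq, of "\<lambda>M. phi1 y2 ** phi2 y1 ** M"] SL calculation
    by (simp add: matrix_mul_assoc phi_inv_inverse)
  ultimately show ?thesis
    by simp
qed

lemma Delta10_eq_Union_pieces:
  assumes R: "unit_reps R" "residue_reps R S"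
  shows "Delta10 = (\<Union>t\<in>index_set R S. piece t)"
proof (intro equalityI subsetI)
  fix A
  assume "A \<in> Delta10"
  with R obtain y1 y2 B where y: "y1 \<in> Yo R S" "y2 \<in> Yo R S" "y2 \<noteq> mat 1"
    and "B \<in> Bo" and A: "A = phi_inv y1 y2 ** B"
    by (rule Delta10_decompose)
  from \<open>B \<in> Bo\<close> obtain d u h where duh: "d \<in> D3" "u \<in> U3" "h \<in> Gamma_inf3" "B = d ** u ** h"
    by (rule Bo_eq_D3_U3_Gamma_inf3)
  then have "A \<in> piece (y1, y2, d, u)"
    unfolding piece_eq A by blast
  moreover have "(y1, y2, d, u) \<in> index_set R S"
    unfolding index_set_def using y duh by blast
  ultimately show "A \<in> (\<Union>t\<in>index_set R S. piece t)"
    by blast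
next
  fix A
  assume "A \<in> (\<Union>t\<in>index_set R S. piece t)"
  then obtain y1 y2 d u h where y: "y1 \<in> Yo R S" "y2 \<in> Yo R S" "y2 \<noteq> mat 1"
    and duh: "d \<in> D3" "u \<in> U3" "h \<in> Gamma_inf3" and A: "A = phi_inv y1 y2 ** (d ** u ** h)"
    unfolding index_set_def by (auto simp: piece_eq)
  have "phi_inv y1 y2 \<in> Delta10"
    using R(1) y by (intro phi_inv_in_Delta10) (auto simp: Yo_SLo Yo_eq_mat1_iff)
  then show "A \<in> Delta10"
    unfolding A using duh by (intro Delta10_mult_Bo D3_U3_Gamma_inf3_in_Bo)
qed

lemma pieces_disjoint:
  assumes R: "unit_reps R" "residue_reps R S"
  shows "disjoint_family_on piece (index_set R S)"
proof -
  have "t = t'" if mem: "t \<in> index_set R S" "t' \<in> index_set R S" "A \<in> piece t" "A \<in> piece t'"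
    for t t' A
  proof -
    obtain y1 y2 d u h where t: "t = (y1, y2, d, u)" and y: "y1 \<in> Yo R S" "y2 \<in> Yo R S" "y2 \<noteq> mat 1"
      and duh: "d \<in> D3" "u \<in> U3" "h \<in> Gamma_inf3" and A: "A = phi_inv y1 y2 ** (d ** u ** h)"
      using mem(1,3) unfolding index_set_def by (auto simp: piece_eq)
    obtain y1' y2' d' u' h' where t': "t' = (y1', y2', d', u')" and y': "y1' \<in> Yo R S" "y2' \<in> Yo R S" "y2' \<noteq> mat 1"
      and duh': "d' \<in> D3" "u' \<in> U3" "h' \<in> Gamma_inf3" and A': "A = phi_inv y1' y2' ** (d' ** u' ** h')"
      using mem(2,4) unfolding index_set_def by (auto simp: piece_eq)
    have "y1 = y1' \<and> y2 = y2' \<and> d ** u ** h = d' ** u' ** h'"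
      using R y y' duh duh' A A' by (intro phi_inv_Bo_unique) (auto intro: D3_U3_Gamma_inf3_in_Bo)
    moreover have "d = d' \<and> u = u'"
      using calculation duh duh' D3_U3_Gamma_inf3_unique by blast
    ultimately show ?thesis
      unfolding t t' by simp
  qed
  then show ?thesis
    unfolding disjoint_family_on_def by blast
qed

theorem theorem2p15:
  fixes R :: "complex set" and S :: "complex \<Rightarrow> complex set"
  assumes "unit_reps R" and "residue_reps R S"
  shows "Delta10 = (\<Union>t\<in>index_set R S. piece t) \<and> disjoint_family_on piece (index_set R S)"
  using Delta10_eq_Union_pieces[OF assms] pieces_disjoint[OF assms] by blast

end
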